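(* Let $\Pi = (\mathcal{A}, \mathcal{E}, \mathcal{R})$ be an epistemic logic program with SE-function $\mathcal{SE}_\Pi$, let $\mathcal{M}$ be a set of interpretations over $\mathcal{A}$, and let $\Phi \subseteq \mathcal{E}$ be a guess. Then $\mathcal{M}$ is a candidate world view of $\Pi$ w.r.t. $\Phi$ (i.e. $\mathcal{M}=AS(\Pi^\Phi)$ and $\mathcal{M}$ is $\Phi$-compatible w.r.t. $\mathcal{E}$) if and only if $\mathcal{M} = \{ Y \mid (Y, Y) \in \mathcal{SE}_\Pi(\Phi) \text{ and there is no } X \subset Y \text{ with } (X, Y) \in \mathcal{SE}_\Pi(\Phi) \}$ and $\mathcal{M}$ is $\Phi$-compatible w.r.t. $\mathcal{E}$.
   Context: A literal over a set of atoms $\mathcal{A}$ is an atom $a$ or $\neg a$. An interpretation is $I\subseteq\mathcal{A}$; $I\models a$ iff $a\in I$, $I\models\neg\ell$ iff $I\not\models\ell$. A (plain) logic program $(\mathcal{A},\mathcal{R})$ has rules $a_1\vee\cdots\vee a_l \leftarrow a_{l+1},\ldots,a_m,\neg\ell_1,\ldots,\neg\ell_n$ ($\ell_i$ literals); $H(r)$ head, $B(r)$ body, $B^+(r)=\{a_{l+1},\ldots,a_m\}$; $M\models r$ iff $M\models B(r)$ implies $M\cap H(r)\neq\emptyset$; $\mathrm{Mods}(\Pi)$ is the set of models. GL-reduct: $\Pi^I=(\mathcal{A},\{H(r)\leftarrow B^+(r)\mid r\in\mathcal{R},\ I\models\neg\ell\ \forall\neg\ell\in B(r)\})$. Answer set: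 model $M$ of $\Pi$ such that no $M'\subset M$ is a model of $\Pi^M$; $AS(\Pi)$ the set of answer sets ($\neg\neg\neg a$ treated as $\neg a$). An SE-model of $\Pi$ is a pair $(X,Y)$ with $X\subseteq Y\subseteq\mathcal{A}$, $Y\models\Pi$ and $X\models\Pi^Y$; $\mathrm{SE}(\Pi)$ is the set of SE-models. An ELP is $(\mathcal{A},\mathcal{E},\mathcal{R})$ with $\mathcal{E}$ a set of epistemic literals $\mathbf{not}\,\ell$ and rules $a_1\vee\cdots\vee a_k\leftarrow \ell_1,\ldots,\ell_m,\xi_1,\ldots,\xi_j,\neg\xi_{j+1},\ldots,\neg\xi_n$, $\xi_i\in\mathcal{E}$. A guess is $\Phi\subseteq\mathcal{E}$; a set $\mathcal{I}$ of interpretations is $\Phi$-compatible w.r.t. $\mathcal{E}$ iff $\mathcal{I}\neq\emptyset$, every $\mathbf{not}\,\ell\in\Phi$ has some $I\in\mathcal{I}$ with $I\not\models\ell$, and every $\mathbf{not}\,\ell\in\mathcal{E}\setminus\Phi$ has $I\models\ell$ for all $I\in\mathcal{I}$. The epistemic reduct $\Pi^\Phi=(\mathcal{A},\mathcal{R}^\Phi)$ replaces each $\mathbf{not}\,\ell\in\Phi$ by $\top$ and every other $\mathbf{not}$ by $\neg$. $\Phi$ is realizable in a set $\mathcal{I}$ of interpretations iff some subset of $\mathcal{I}$ is $\Phi$-compatible w.r.t. $\mathcal{E}$; $\Phi$ is realizable in $\Pi$ iff it is realizable in $\mathrm{Mods}(\Pi^\Phi)$. The SE-function of $\Pi$ maps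 each guess $\Phi\subseteq\mathcal{E}$ to $\mathcal{SE}_\Pi(\Phi)=\mathrm{SE}(\Pi^\Phi)$ if $\Phi$ is realizable in $\Pi$, and to $\emptyset$ otherwise. *)

theory Defs
  imports Main
begin

datatype 'a lit = Pos 'a | NegL 'a

fun atom_of :: "'a lit \<Rightarrow> 'a" where
  "atom_of (Pos a) = a" | "atom_of (NegL a) = a"

fun lsat :: "'a set \<Rightarrow> 'a lit \<Rightarrow> bool" where
  "lsat I (Pos a) = (a \<in> I)" | "lsat I (NegL a) = (a \<notin> I)"

(* negate l is the literal equivalent to \<not>l (using \<not>\<not>\<not>a = \<not>a, \<not>\<not>a = a) *)
fun negate :: "'a lit \<Rightarrow> 'a lit" where
  "negate (Pos a) = NegL a" | "negate (NegL a) = Pos a"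

(* plain rule  H \<leftarrow> B+, \<not>l1,...,\<not>ln ;  pneg stores the literals l_i *)
datatype 'a prule = PRule (phead: "'a set") (ppos: "'a set") (pneg: "'a lit set")

definition body_sat :: "'a set \<Rightarrow> 'a prule \<Rightarrow> bool" where
  "body_sat I r \<longleftrightarrow> ppos r \<subseteq> I \<and> (\<forall>l\<in>pneg r. \<not> lsat I l)"

definition rule_sat :: "'a set \<Rightarrow> 'a prule \<Rightarrow> bool" where
  "rule_sat I r \<longleftrightarrow> (body_sat I r \<longrightarrow> I \<inter> phead r \<noteq> {})"

definition Mods :: "'a set \<Rightarrow> 'a prule set \<Rightarrow> 'a set set" where
  "Mods A R = {I. I \<subseteq> A \<and> (\<forall>r\<in>R. rule_sat I r)}"

definition gl_reduct :: "'a set \<Rightarrow> 'a prule set \<Rightarrow> 'a prule set" where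
  "gl_reduct I R = {PRule (phead r) (ppos r) {} | r. r \<in> R \<and> (\<forall>l\<in>pneg r. \<not> lsat I l)}"

definition AS :: "'a set \<Rightarrow> 'a prule set \<Rightarrow> 'a set set" where
  "AS A R = {M. M \<in> Mods A R \<and> \<not> (\<exists>M'. M' \<subset> M \<and> M' \<in> Mods A (gl_reduct M R))}"

definition SE :: "'a set \<Rightarrow> 'a prule set \<Rightarrow> ('a set \<times> 'a set) set" where
  "SE A R = {(X, Y). X \<subseteq> Y \<and> Y \<subseteq> A \<and> Y \<in> Mods A R \<and> X \<in> Mods A (gl_reduct Y R)}"

(* ELP rule  H \<leftarrow> l1..lm, \<xi>1..\<xi>j, \<not>\<xi>(j+1)..\<not>\<xi>n ; an epistemic literal  not l
   is represented by the literal l; epos/eneg hold the unnegated/negated epistemic literals *)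
datatype 'a erule = ERule (ehead: "'a set") (elits: "'a lit set") (epos: "'a lit set") (eneg: "'a lit set")

definition wf_elp :: "'a set \<Rightarrow> 'a lit set \<Rightarrow> 'a erule set \<Rightarrow> bool" where
  "wf_elp A E R \<longleftrightarrow> atom_of ` E \<subseteq> A \<and>
     (\<forall>r\<in>R. ehead r \<subseteq> A \<and> atom_of ` elits r \<subseteq> A \<and> epos r \<subseteq> E \<and> eneg r \<subseteq> E)"

definition compatible :: "'a lit set \<Rightarrow> 'a lit set \<Rightarrow> 'a set set \<Rightarrow> bool" where
  "compatible E \<Phi> Is \<longleftrightarrow> Is \<noteq> {} \<and> (\<forall>l\<in>\<Phi>. \<exists>I\<in>Is. \<not> lsat I l) \<and>
     (\<forall>l\<in>E - \<Phi>. \<forall>I\<in>Is. lsat I l)"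

(* epistemic reduct of a rule: not l \<in> \<Phi> becomes \<top> (dropped); other  not l  becomes \<not>l,
   so  \<not>(not l)  becomes \<not>\<not>l = \<not>(negate l); a literal \<not>a in the body is \<not>(Pos a) *)
definition ep_reduct_rule :: "'a lit set \<Rightarrow> 'a erule \<Rightarrow> 'a prule" where
  "ep_reduct_rule \<Phi> r = PRule (ehead r) {a. Pos a \<in> elits r}
     ({Pos a | a. NegL a \<in> elits r} \<union> (epos r - \<Phi>) \<union> negate ` (eneg r - \<Phi>))"

(* rules containing \<not>(not l) with not l \<in> \<Phi> get body literal \<not>\<top> = \<bottom> and are removed *)
definition ep_reduct :: "'a lit set \<Rightarrow> 'a erule set \<Rightarrow> 'a prule set" where
  "ep_reduct \<Phi> R = {ep_reduct_rule \<Phi> r | r. r \<in> R \<and> eneg r \<inter> \<Phi> = {}}"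

definition realizable_in :: "'a lit set \<Rightarrow> 'a lit set \<Rightarrow> 'a set set \<Rightarrow> bool" where
  "realizable_in E \<Phi> Is \<longleftrightarrow> (\<exists>S\<subseteq>Is. compatible E \<Phi> S)"

definition realizable :: "'a set \<Rightarrow> 'a lit set \<Rightarrow> 'a erule set \<Rightarrow> 'a lit set \<Rightarrow> bool" where
  "realizable A E R \<Phi> \<longleftrightarrow> realizable_in E \<Phi> (Mods A (ep_reduct \<Phi> R))"

definition SE_fun :: "'a set \<Rightarrow> 'a lit set \<Rightarrow> 'a erule set \<Rightarrow> 'a lit set \<Rightarrow> ('a set \<times> 'a set) set" where
  "SE_fun A E R \<Phi> = (if realizable A E R \<Phi> then SE A (ep_reduct \<Phi> R) else {})"

definition candidate_world_view :: "'a set \<Rightarrow> 'a lit set \<Rightarrow> 'a erule set \<Rightarrow> 'a lit set \<Rightarrow> 'a set set \<Rightarrow> bool" where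
  "candidate_world_view A E R \<Phi> M \<longleftrightarrow> M = AS A (ep_reduct \<Phi> R) \<and> compatible E \<Phi> M"

end

theory Submission
  imports Defs
begin

(* The answer sets of a plain program are exactly the Y such that (Y, Y) is an SE-model and
   no (X, Y) with X a proper subset of Y is one, because every model of a program is a model
   of its own GL-reduct. For a realizable guess the SE-function is the SE-model set of the
   epistemic reduct, so both sides agree. For a non-realizable guess both sides are false:
   the SE-function is empty, so the right-hand side would require a compatible empty set, and
   the answer sets are models of the epistemic reduct, so a compatible set of them would
   realize the guess. *)

lemma Mods_subset: "I \<in> Mods A P \<Longrightarrow> I \<subseteq> A"
  unfolding Mods_def by simp

lemma Mods_gl_reduct_self:
  assumes "Y \<in> Mods A P"
  shows "Y \<in> Mods A (gl_reduct Y P)"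
proof -
  have "rule_sat Y r'" if r': "r' \<in> gl_reduct Y P" for r'
  proof -
    obtain r where r: "r \<in> P" "\<forall>l\<in>pneg r. \<not> lsat Y l" "r' = PRule (phead r) (ppos r) {}"
      using r' unfolding gl_reduct_def by auto
    have "rule_sat Y r" using assms r(1) unfolding Mods_def by blast
    with r(2,3) show ?thesis unfolding rule_sat_def body_sat_def by simp
  qed
  with assms show ?thesis unfolding Mods_def by blast
qed

lemma SE_iff: "(X, Y) \<in> SE A P \<longleftrightarrow> X \<subseteq> Y \<and> Y \<in> Mods A P \<and> X \<in> Mods A (gl_reduct Y P)"
  unfolding SE_def using Mods_subset by blast

lemma SE_diag_iff: "(Y, Y) \<in> SE A P \<longleftrightarrow> Y \<in> Mods A P"
  using SE_iff Mods_gl_reduct_self by blast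

lemma AS_eq_SE_minimal:
  "AS A P = {Y. (Y, Y) \<in> SE A P \<and> \<not> (\<exists>X. X \<subset> Y \<and> (X, Y) \<in> SE A P)}"
  unfolding AS_def SE_diag_iff SE_iff by blast

lemma AS_subset_Mods: "AS A P \<subseteq> Mods A P"
  unfolding AS_def by blast

lemma realizable_if_compatible_AS:
  "compatible E \<Phi> (AS A (ep_reduct \<Phi> R)) \<Longrightarrow> realizable A E R \<Phi>"
  unfolding realizable_def realizable_in_def using AS_subset_Mods by blast

lemma not_compatible_empty: "\<not> compatible E \<Phi> {}"
  unfolding compatible_def by simp

theorem lemma1:
  fixes A :: "'a set" and E :: "'a lit set" and R :: "'a erule set"
    and M :: "'a set set" and \<Phi> :: "'a lit set"
  assumes "wf_elp A E R"
    and "\<forall>I\<in>M. I \<subseteq> A"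
    and "\<Phi> \<subseteq> E"
  shows "candidate_world_view A E R \<Phi> M \<longleftrightarrow>
    (M = {Y. (Y, Y) \<in> SE_fun A E R \<Phi> \<and> \<not> (\<exists>X. X \<subset> Y \<and> (X, Y) \<in> SE_fun A E R \<Phi>)}
     \<and> compatible E \<Phi> M)"
proof (cases "realizable A E R \<Phi>")
  case True
  then show ?thesis
    unfolding candidate_world_view_def SE_fun_def AS_eq_SE_minimal by simp
next
  case False
  then have "SE_fun A E R \<Phi> = {}"
    unfolding SE_fun_def by simp
  moreover have "\<not> compatible E \<Phi> (AS A (ep_reduct \<Phi> R))"
    using False realizable_if_compatible_AS by blast
  ultimately show ?thesis
    unfolding candidate_world_view_def using not_compatible_empty[of E \<Phi>] by auto
qed

end
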